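(* Let $c>0$, $0<q_1<q_2<1$, $a,b\in\mathbb{R}$, and let $\Delta(s)=s^{q_1+q_2}+as^{q_2}+bs^{q_1}+c$, with principal values of the complex power functions. 1. If $a+1>0$, $a+b>0$ and $b+c>0$, then all roots of $\Delta(s)$ lie in the open left half-plane, regardless of $q_1$ and $q_2$. 2. If $a+b+c+1\le 0$, then $\Delta(s)$ has at least one positive real root, regardless of $q_1$ and $q_2$.
   Context: Principal value: $s^{q}=|s|^q e^{iq\arg(s)}$ with $\arg(s)\in(-\pi,\pi]$. *)

theory Defs
  imports "HOL-Analysis.Analysis"
begin

text \<open>Characteristic function with principal-value complex powers
  (Isabelle's complex powr uses the principal branch Ln, Im in (-pi, pi];
  and 0 powr q = 0).\<close>
definition Delta :: "real \<Rightarrow> real \<Rightarrow> real \<Rightarrow> real \<Rightarrow> real \<Rightarrow> complex \<Rightarrow> complex" where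
  "Delta q1 q2 a b c s =
     s powr (complex_of_real (q1 + q2)) + complex_of_real a * s powr (complex_of_real q2)
     + complex_of_real b * s powr (complex_of_real q1) + complex_of_real c"

end

theory Submission
  imports Defs
begin

(* Let Re s >= 0 and Delta(s) = 0; then s <> 0. Off the negative real axis,
     Delta_(a,b,c)(s) = c s^(q1+q2) Delta_(b/c,a/c,1/c)(1/s),
   and the new coefficients satisfy the same hypotheses, so we may assume r = |s| >= 1;
   by conjugation also 0 <= theta = arg s <= pi/2.
   If theta = 0, then Delta(s) is a positive real. If theta > 0, then with x = r^q1,
   y = r^q2, z = r^(q1+q2) and S_q = sin (q theta) the imaginary part of Delta(s) is
     (z S_(q1+q2) - y S_q2 + x S_q1) + (a + 1) (y S_q2 - x S_q1) + (a + b) x S_q1,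
   whose first summand is nonnegative by concavity of sin on [0, pi] and convexity of
   q -> r^q, the second because r >= 1, and the third is positive.
   The positive root of the second part comes from the intermediate value theorem on [0, 1],
   since Delta(0) = c > 0 and Delta(1) = 1 + a + b + c <= 0. *)

lemma mult_sin_le_sin_mult:
  fixes \<mu> y :: real
  assumes "0 \<le> \<mu>" "\<mu> \<le> 1" "0 \<le> y" "y \<le> pi"
  shows "\<mu> * sin y \<le> sin (\<mu> * y)"
proof -
  let ?h = "\<lambda>t. sin (\<mu> * t) - \<mu> * sin t"
  have "?h 0 \<le> ?h y"
  proof (rule DERIV_nonneg_imp_nondecreasing[OF assms(3)])
    fix x assume x: "0 \<le> x" "x \<le> y"
    have "DERIV ?h x :> \<mu> * (cos (\<mu> * x) - cos x)"
      by (auto intro!: derivative_eq_intros simp: algebra_simps)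
    moreover have "cos x \<le> cos (\<mu> * x)"
      using x assms by (intro cos_monotone_0_pi_le) (auto simp: mult_left_le_one_le)
    ultimately show "\<exists>d. DERIV ?h x :> d \<and> d \<ge> 0"
      using assms by auto
  qed
  then show ?thesis by simp
qed

lemma sin_mult_ratio_le:
  fixes p q \<theta> :: real
  assumes "0 \<le> p" "p \<le> q" "0 \<le> \<theta>" "q * \<theta> \<le> pi"
  shows "p * sin (q * \<theta>) \<le> q * sin (p * \<theta>)"
proof (cases "q = 0")
  case False
  then have "(p / q) * sin (q * \<theta>) \<le> sin ((p / q) * (q * \<theta>))"
    using assms by (intro mult_sin_le_sin_mult) auto
  then show ?thesis
    using False assms by (simp add: field_simps)
qed (use assms in simp)

lemma sin_mult_diff_le:
  fixes p q \<theta> :: real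
  assumes "0 \<le> p" "p \<le> q" "0 \<le> \<theta>" "q * \<theta> \<le> pi / 2"
  shows "(q - p) * sin (q * \<theta>) \<le> q * sin ((p + q) * \<theta>)"
proof -
  define \<mu> where "\<mu> = (pi - (p + q) * \<theta>) / (pi - q * \<theta>)"
  have pq: "p * \<theta> \<le> q * \<theta>" "0 \<le> p * \<theta>" "0 \<le> q * \<theta>"
    using assms by (auto intro: mult_right_mono)
  have den: "0 < pi - q * \<theta>" and num: "0 \<le> pi - (p + q) * \<theta>"
    using assms(4) pq pi_gt_zero unfolding distrib_right by linarith+
  have \<mu>: "0 \<le> \<mu>" "\<mu> \<le> 1" "\<mu> * (pi - q * \<theta>) = pi - (p + q) * \<theta>"
    using den num pq by (auto simp: \<mu>_def distrib_right)
  have "\<mu> * sin (pi - q * \<theta>) \<le> sin (\<mu> * (pi - q * \<theta>))"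
    using \<mu> den pq by (intro mult_sin_le_sin_mult) linarith+
  then have sin_le: "\<mu> * sin (q * \<theta>) \<le> sin ((p + q) * \<theta>)"
    using \<mu>(3) by simp
  have "p * (2 * q * \<theta>) \<le> p * pi"
    using assms by (intro mult_left_mono) auto
  moreover have "q * (pi - (p + q) * \<theta>) - (q - p) * (pi - q * \<theta>) = p * pi - p * (2 * q * \<theta>)"
    by (simp add: algebra_simps)
  ultimately have "(q - p) * (pi - q * \<theta>) \<le> q * (pi - (p + q) * \<theta>)"
    by linarith
  then have "q - p \<le> q * \<mu>"
    using den by (simp add: \<mu>_def pos_le_divide_eq)
  moreover have "0 \<le> sin (q * \<theta>)"
    using pq den by (intro sin_ge_zero) linarith+
  ultimately have "(q - p) * sin (q * \<theta>) \<le> q * (\<mu> * sin (q * \<theta>))"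
    by (metis mult.assoc mult_right_mono)
  also have "\<dots> \<le> q * sin ((p + q) * \<theta>)"
    using sin_le assms by (intro mult_left_mono) auto
  finally show ?thesis .
qed

lemma powr_le_convex_combination:
  fixes r t x y :: real
  assumes "r > 0" "0 \<le> t" "t \<le> 1"
  shows "r powr ((1 - t) * x + t * y) \<le> (1 - t) * r powr x + t * r powr y"
  using convex_onD[OF exp_convex, of t "x * ln r" "y * ln r"] assms
  by (simp add: powr_def algebra_simps)

lemma powr_sin_le:
  fixes r p q \<theta> :: real
  assumes "r > 0" "0 \<le> p" "p \<le> q" "0 < q" "0 \<le> \<theta>" "q * \<theta> \<le> pi / 2"
  shows "r powr q * sin (q * \<theta>) \<le> r powr (p + q) * sin ((p + q) * \<theta>) + r powr p * sin (p * \<theta>)"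
proof -
  have q\<theta>: "0 \<le> q * \<theta>" "q * \<theta> \<le> pi"
    using assms pi_gt_zero mult_nonneg_nonneg[of q \<theta>] by linarith+
  have "r powr ((1 - p / q) * (p + q) + (p / q) * p) \<le> (1 - p / q) * r powr (p + q) + (p / q) * r powr p"
    using assms by (intro powr_le_convex_combination) auto
  moreover have "(1 - p / q) * (p + q) + (p / q) * p = q"
    using assms by (simp add: field_simps)
  ultimately have convex: "q * r powr q \<le> (q - p) * r powr (p + q) + p * r powr p"
    using assms by (simp add: field_simps)
  have sin_nonneg: "0 \<le> sin (q * \<theta>)"
    using q\<theta> by (intro sin_ge_zero)
  have "q * (r powr q * sin (q * \<theta>)) \<le> ((q - p) * r powr (p + q) + p * r powr p) * sin (q * \<theta>)"
    using mult_right_mono[OF convex sin_nonneg] by (simp only: mult.assoc)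
  also have "\<dots> = r powr (p + q) * ((q - p) * sin (q * \<theta>)) + r powr p * (p * sin (q * \<theta>))"
    by (simp add: algebra_simps)
  also have "\<dots> \<le> r powr (p + q) * (q * sin ((p + q) * \<theta>)) + r powr p * (q * sin (p * \<theta>))"
    using assms q\<theta> sin_mult_diff_le[of p q \<theta>] sin_mult_ratio_le[of p q \<theta>]
    by (intro add_mono mult_left_mono) auto
  also have "\<dots> = q * (r powr (p + q) * sin ((p + q) * \<theta>) + r powr p * sin (p * \<theta>))"
    by (simp add: algebra_simps)
  finally show ?thesis
    using assms by simp
qed

lemma powr_poly_pos:
  fixes r p q a b c :: real
  assumes "1 \<le> r" "0 \<le> p" "p \<le> q" "a + 1 > 0" "a + b > 0" "c > 0"
  shows "r powr (p + q) + a * r powr q + b * r powr p + c > 0"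
proof -
  define x where "x = r powr p"
  define y where "y = r powr q"
  have x: "1 \<le> x" and xy: "x \<le> y"
    using assms by (auto simp: x_def y_def ge_one_powr_ge_zero intro: powr_mono)
  have "x * (x + a) \<le> y * (x + a)"
    using x xy assms by (intro mult_right_mono) auto
  moreover have "x * x + (a + b) * x + c > 0"
    using x assms by (simp add: add_pos_pos)
  ultimately have "x * y + a * y + b * x + c > 0"
    by (simp add: algebra_simps)
  then show ?thesis
    using assms by (simp add: x_def y_def powr_add)
qed

lemma powr_of_real_polar:
  fixes s :: complex and q :: real
  assumes "s \<noteq> 0"
  shows "s powr complex_of_real q = complex_of_real (cmod s powr q) * cis (q * Arg s)"
  using assms by (simp add: powr_def Ln_Arg exp_add exp_of_real cis_conv_exp algebra_simps flip: exp_of_real)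

lemma complex_inverse_powr:
  fixes s w :: complex
  assumes "s \<notin> \<real>\<^sub>\<le>\<^sub>0"
  shows "inverse s powr w = inverse (s powr w)"
  using assms by (auto simp: powr_def Ln_inverse exp_minus)

lemma Delta_inverse:
  assumes "s \<notin> \<real>\<^sub>\<le>\<^sub>0" "c \<noteq> 0"
  shows "Delta q1 q2 a b c s
    = complex_of_real c * s powr complex_of_real (q1 + q2) * Delta q1 q2 (b / c) (a / c) (1 / c) (inverse s)"
proof -
  have "s \<noteq> 0" using assms(1) by auto
  then have "s powr complex_of_real q \<noteq> 0" for q by simp
  moreover have "s powr complex_of_real (q1 + q2) = s powr complex_of_real q1 * s powr complex_of_real q2"
    by (simp add: powr_add)
  ultimately show ?thesis using assms
    unfolding Delta_def complex_inverse_powr[OF assms(1)] by (simp add: field_simps)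
qed

lemma Delta_cnj:
  assumes "Im s = 0 \<Longrightarrow> Re s \<ge> 0"
  shows "Delta q1 q2 a b c (cnj s) = cnj (Delta q1 q2 a b c s)"
  using assms by (simp add: Delta_def cnj_powr)

lemma Delta_of_real:
  assumes "0 \<le> t"
  shows "Delta q1 q2 a b c (complex_of_real t)
    = complex_of_real (t powr (q1 + q2) + a * t powr q2 + b * t powr q1 + c)"
  unfolding Delta_def powr_of_real[OF assms] by simp

lemma Im_Delta_pos:
  fixes q1 q2 a b c :: real
  assumes "0 < q1" "q1 \<le> q2" "q2 \<le> 1" "a + 1 > 0" "a + b > 0"
    and s: "1 \<le> cmod s" "0 \<le> Re s" "0 < Im s"
  shows "Im (Delta q1 q2 a b c s) > 0"
proof -
  define r \<theta> where "r = cmod s" and "\<theta> = Arg s"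
  define x y z where "x = r powr q1" and "y = r powr q2" and "z = r powr (q1 + q2)"
  define S1 S2 S12 where "S1 = sin (q1 * \<theta>)" and "S2 = sin (q2 * \<theta>)"
    and "S12 = sin ((q1 + q2) * \<theta>)"
  have "s \<noteq> 0" using s by auto
  then have Im_Delta: "Im (Delta q1 q2 a b c s) = z * S12 + a * (y * S2) + b * (x * S1)"
    unfolding Delta_def powr_of_real_polar[OF \<open>s \<noteq> 0\<close>]
    by (simp add: x_def y_def z_def S1_def S2_def S12_def r_def \<theta>_def)
  have \<theta>: "0 < \<theta>" "\<theta> \<le> pi / 2"
    using s Arg_Re_nonneg[of s] by (auto simp: \<theta>_def Arg_pos_iff)
  have "q2 * \<theta> \<le> \<theta>"
    using assms \<theta> by (simp add: mult_left_le_one_le)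
  then have q\<theta>: "0 < q1 * \<theta>" "q1 * \<theta> \<le> q2 * \<theta>" "q2 * \<theta> \<le> pi / 2"
    using assms \<theta> by (simp, simp, linarith)
  have S1: "0 < S1" and S12: "S1 \<le> S2"
    using q\<theta> pi_gt_zero unfolding S1_def S2_def
    by (auto intro!: sin_gt_zero sin_monotone_2pi_le)
  have "1 \<le> r" using s by (simp add: r_def)
  then have xy: "0 < x" "x \<le> y"
    using assms by (auto simp: x_def y_def intro: powr_mono)
  have "x * S1 \<le> y * S2"
    using xy S1 S12 by (intro mult_mono) auto
  moreover have "y * S2 \<le> z * S12 + x * S1"
    using powr_sin_le[of r q1 q2 \<theta>] assms \<theta> q\<theta> \<open>1 \<le> r\<close>
    by (simp add: x_def y_def z_def S1_def S2_def S12_def)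
  moreover have "0 < (a + b) * (x * S1)"
    using assms xy S1 by simp
  ultimately have "0 < (z * S12 - y * S2 + x * S1) + (a + 1) * (y * S2 - x * S1) + (a + b) * (x * S1)"
    using assms mult_nonneg_nonneg[of "a + 1" "y * S2 - x * S1"] by linarith
  then show ?thesis
    unfolding Im_Delta by (simp add: algebra_simps)
qed

lemma Delta_nonzero_outside_unit_disc:
  fixes q1 q2 a b c :: real
  assumes "0 < q1" "q1 \<le> q2" "q2 \<le> 1" "a + 1 > 0" "a + b > 0" "c > 0"
    and s: "1 \<le> cmod s" "0 \<le> Re s"
  shows "Delta q1 q2 a b c s \<noteq> 0"
proof -
  consider "Im s > 0" | "Im s < 0" | "Im s = 0" by linarith
  then show ?thesis
  proof cases
    case 1
    then show ?thesis using Im_Delta_pos[of q1 q2 a b s c] assms by fastforce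
  next
    case 2
    then have "Im (Delta q1 q2 a b c (cnj s)) > 0"
      using assms by (intro Im_Delta_pos) auto
    then show ?thesis using s by (auto simp: Delta_cnj)
  next
    case 3
    then have "s = complex_of_real (Re s)" and "1 \<le> Re s"
      using s by (auto simp: complex_eq_iff cmod_def)
    then show ?thesis
      using powr_poly_pos[of "Re s" q1 q2 a b c] Delta_of_real[of "Re s" q1 q2 a b c] assms
      by (metis of_real_eq_0_iff order.strict_iff_not order_trans zero_le_one)
  qed
qed

lemma Delta_nonzero_right_half_plane:
  fixes q1 q2 a b c :: real
  assumes "0 < q1" "q1 \<le> q2" "q2 \<le> 1" "a + 1 > 0" "a + b > 0" "b + c > 0" "c > 0"
    and "0 \<le> Re s"
  shows "Delta q1 q2 a b c s \<noteq> 0"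
proof (cases "1 \<le> cmod s")
  case True
  then show ?thesis using Delta_nonzero_outside_unit_disc assms by simp
next
  case False
  show ?thesis
  proof (cases "s = 0")
    case True
    then show ?thesis using assms by (simp add: Delta_def)
  next
    case nz: False
    have s: "s \<notin> \<real>\<^sub>\<le>\<^sub>0"
      using nz assms by (auto simp: complex_nonpos_Reals_iff complex_eq_iff)
    have "Delta q1 q2 (b / c) (a / c) (1 / c) (inverse s) \<noteq> 0"
    proof (rule Delta_nonzero_outside_unit_disc)
      show "1 \<le> cmod (inverse s)"
        using False nz by (simp add: norm_inverse one_le_inverse_iff)
      show "0 \<le> Re (inverse s)"
        using assms by (simp add: Re_divide')
    qed (use assms in \<open>simp_all add: field_simps\<close>)
    then show ?thesis
      using Delta_inverse[OF s, of c q1 q2 a b] assms nz by simp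
  qed
qed

lemma Delta_positive_real_root:
  fixes q1 q2 a b c :: real
  assumes "0 < q1" "0 < q2" "c > 0" "a + b + c + 1 \<le> 0"
  shows "\<exists>x>0. Delta q1 q2 a b c (complex_of_real x) = 0"
proof -
  define f where "f t = t powr (q1 + q2) + a * t powr q2 + b * t powr q1 + c" for t
  have "continuous_on {0..1} f"
    unfolding f_def using assms by (intro continuous_intros continuous_on_powr') auto
  moreover have "f 1 \<le> 0" "0 \<le> f 0"
    using assms by (simp_all add: f_def)
  ultimately obtain t where t: "0 \<le> t" "t \<le> 1" "f t = 0"
    using IVT2'[of f 1 0 0] by auto
  moreover have "t \<noteq> 0"
    using t assms by (auto simp: f_def)
  ultimately have "0 < t" "Delta q1 q2 a b c (complex_of_real t) = 0"
    using Delta_of_real[of t q1 q2 a b c] by (auto simp: f_def)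
  then show ?thesis by blast
qed

theorem proposition2:
  fixes q1 q2 a b c :: real
  assumes "c > 0" and "0 < q1" and "q1 < q2" and "q2 < 1"
  shows "(a + 1 > 0 \<and> a + b > 0 \<and> b + c > 0 \<longrightarrow>
            (\<forall>s::complex. Delta q1 q2 a b c s = 0 \<longrightarrow> Re s < 0))
       \<and> (a + b + c + 1 \<le> 0 \<longrightarrow>
            (\<exists>x::real. x > 0 \<and> Delta q1 q2 a b c (complex_of_real x) = 0))"
  using assms Delta_nonzero_right_half_plane[of q1 q2 a b c] Delta_positive_real_root[of q1 q2 c a b]
  by (auto simp: not_less[symmetric])

end
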